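(* Let $m,p\in(0,\infty)$, let $u,v$ be weights such that $(u,v)$ is an admissible pair of weights with respect to $(m,p)$, and let $\varphi$ be the fundamental function of $CL^{m,p}(u,v)$. Then there exist $K\in\{0,\infty\}$, the set \[ \mathbb{K}:=\begin{cases}\{k\in\mathbb{Z},\ k\le 0\} & \text{if } K=0,\\ \mathbb{Z} & \text{if } K=\infty,\end{cases} \] sets $\mathbb{K}_1,\mathbb{K}_2$ with $\mathbb{K}_1\cap\mathbb{K}_2=\varnothing$ and $\mathbb{K}_1\cup\mathbb{K}_2=\mathbb{K}$, and a sequence $\{t_k\}_{k\in\mathbb{K}}$ with the following properties: $0<t_{k-1}\le t_k<\infty$ for all $k\in\mathbb{K}\setminus\{K\}$; $t_0=\infty$ in case $K=0$; the inequalities \[ \int_0^{t_k} v(t)\,dt \ge 2^{\frac pm+1}\int_0^{t_{k-1}} v(t)\,dt,\qquad \varphi^p(t_k)\ge 2^{\frac pm+1}\varphi^p(t_{k-1}) \] hold for all $k\in\mathbb{K}$; the identity $\int_0^{t_k} v(t)\,dt = 2^{\frac pm+1}\int_0^{t_{k-1}} v(t)\,dt$ holds for all $k\in\mathbb{K}_1$; and the identity $\varphi^p(t_k)=2^{\frac pm+1}\varphi^p(t_{k-1})$ holds for all $k\in\mathbb{K}_2$.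
   Context: A weight is a nonnegative measurable function on $(0,\infty)$. For a weight $u$ and $0\le s\le t\le\infty$ put $U(s,t):=\int_s^t u(x)\,dx$. For $m,p\in(0,\infty)$ and weights $u,v$, the fundamental function of the Copson–Lorentz space $CL^{m,p}(u,v)$ is $\varphi:[0,\infty]\to[0,\infty]$, $\varphi(t):=\left(\int_0^t v(s)\,U(s,t)^{p/m}\,ds\right)^{1/p}$. The pair $(u,v)$ is called admissible with respect to $(m,p)$ if $0<\varphi(t)<\infty$ for all $t\in(0,\infty)$. *)

theory Defs
  imports "HOL-Analysis.Analysis"
begin

text \<open>Real powers on [0,\<infinity>] (used only with positive exponents):
  \<infinity> to a positive power is \<infinity>; finite values use the real powr.\<close>
definition epowr :: "ennreal \<Rightarrow> real \<Rightarrow> ennreal" where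
  "epowr x a = (if x = \<infinity> then \<infinity> else ennreal (enn2real x powr a))"

definition weight :: "(real \<Rightarrow> real) \<Rightarrow> bool" where
  "weight w \<longleftrightarrow> set_borel_measurable lborel {0<..} w \<and> (\<forall>x>0. 0 \<le> w x)"

definition Wint :: "(real \<Rightarrow> real) \<Rightarrow> real \<Rightarrow> ennreal \<Rightarrow> ennreal" where
  "Wint u s t = (\<integral>\<^sup>+ x \<in> {x::real. 0 < x \<and> s < x \<and> ennreal x < t}. ennreal (u x) \<partial>lborel)"

definition fundfun :: "real \<Rightarrow> real \<Rightarrow> (real \<Rightarrow> real) \<Rightarrow> (real \<Rightarrow> real) \<Rightarrow> ennreal \<Rightarrow> ennreal" where
  "fundfun m p u v t =
     epowr (\<integral>\<^sup>+ s \<in> {s::real. 0 < s \<and> ennreal s < t}.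
              ennreal (v s) * epowr (Wint u s t) (p / m) \<partial>lborel) (1 / p)"

definition admissible :: "real \<Rightarrow> real \<Rightarrow> (real \<Rightarrow> real) \<Rightarrow> (real \<Rightarrow> real) \<Rightarrow> bool" where
  "admissible m p u v \<longleftrightarrow>
     (\<forall>t::real. 0 < t \<longrightarrow> 0 < fundfun m p u v (ennreal t) \<and> fundfun m p u v (ennreal t) < \<infinity>)"

definition Kset :: "ereal \<Rightarrow> int set" where
  "Kset K = (if K = 0 then {k. k \<le> 0} else UNIV)"

end

theory Submission
  imports Defs
begin

text \<open>Write \<open>V(t) = \<integral>\<^sub>0\<^sup>t v\<close>, \<open>\<Phi>(t) = \<phi>(t)\<^sup>p\<close> and \<open>C = 2\<^sup>p\<^sup>/\<^sup>m\<^sup>+\<^sup>1\<close>. Both \<open>V\<close> and \<open>\<Phi>\<close> are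
  nondecreasing, vanish at 0, are left-continuous, and are right-continuous wherever they are
  finite a little further to the right (monotone convergence); admissibility makes \<open>\<Phi>\<close> positive
  and finite on \<open>(0, \<infinity>)\<close>. From a point \<open>T\<close> one steps down to the supremum \<open>s\<close> of the points
  with \<open>C V(s) \<le> V(T)\<close> and \<open>C \<Phi>(s) \<le> \<Phi>(T)\<close>: by left-continuity both inequalities survive at
  \<open>s\<close>, and by right-continuity one of them must be an equality there. Starting at \<open>t\<^sub>0 = \<infinity>\<close> this
  gives the case \<open>K = 0\<close>, as long as \<open>V(\<infinity>)\<close> or \<open>\<Phi>(\<infinity>)\<close> is finite. Otherwise \<open>V\<close> is finite on
  \<open>[0, \<infinity>)\<close>, the symmetric step up to an infimum is available as well, and iterating both steps
  from \<open>t\<^sub>0 = 1\<close> gives the case \<open>K = \<infinity>\<close>. \<open>K\<^sub>1\<close> collects the steps that are equalities for \<open>V\<close>.\<close>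

section \<open>Extended nonnegative reals\<close>

lemma ennreal_le_divide_iff:
  fixes a c x :: ennreal
  assumes "0 < c" "c < \<infinity>"
  shows "x \<le> a / c \<longleftrightarrow> c * x \<le> a"
proof
  assume "x \<le> a / c"
  then have "c * x \<le> c * (a / c)" by (rule mult_left_mono) simp
  then show "c * x \<le> a"
    using assms by (simp add: ennreal_times_divide mult_divide_eq_ennreal mult.commute)
next
  assume "c * x \<le> a"
  then have "x * c / c \<le> a / c" by (simp add: mult.commute divide_right_mono_ennreal)
  then show "x \<le> a / c" using assms by (simp add: mult_divide_eq_ennreal)
qed

lemma ennreal_divide_le_iff:
  fixes a c x :: ennreal
  assumes "0 < c" "c < \<infinity>"
  shows "a / c \<le> x \<longleftrightarrow> a \<le> c * x"
proof
  assume "a / c \<le> x"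
  then have "c * (a / c) \<le> c * x" by (rule mult_left_mono) simp
  then show "a \<le> c * x"
    using assms by (simp add: ennreal_times_divide mult_divide_eq_ennreal mult.commute)
next
  assume "a \<le> c * x"
  then have "a / c \<le> x * c / c" by (simp add: mult.commute divide_right_mono_ennreal)
  then show "a / c \<le> x" using assms by (simp add: mult_divide_eq_ennreal)
qed

lemma ennreal_less_divide_iff:
  fixes a c x :: ennreal
  assumes "0 < c" "c < \<infinity>"
  shows "x < a / c \<longleftrightarrow> c * x < a"
  using ennreal_divide_le_iff[OF assms, of a x] by (simp add: not_le[symmetric])

lemma ennreal_less_mult:
  fixes c a :: ennreal
  assumes "1 < c" "0 < a" "a < \<infinity>"
  shows "a < c * a"
proof -
  obtain r where r: "a = ennreal r" "0 < r" using assms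
    by (metis ennreal_cases ennreal_less_zero_iff infinity_ennreal_def less_irrefl)
  show ?thesis
  proof (cases "c = \<infinity>")
    case True then show ?thesis using assms by (simp add: ennreal_mult_top)
  next
    case False
    then obtain q where "c = ennreal q" "1 < q" using assms
      by (metis ennreal_cases ennreal_less_iff ennreal_1 infinity_ennreal_def zero_le_one)
    then show ?thesis using r by (simp add: ennreal_mult''[symmetric] ennreal_less_iff)
  qed
qed

lemma mono_inverse_Inf:
  fixes f :: "'a::complete_lattice \<Rightarrow> 'b::complete_lattice" and g :: "'b \<Rightarrow> 'a"
  assumes "mono f" "mono g" "\<And>x. g (f x) = x" "\<And>y. f (g y) = y"
  shows "f (Inf S) = Inf (f ` S)"
proof (rule antisym)
  show "f (Inf S) \<le> Inf (f ` S)"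
    using assms(1) by (auto intro!: Inf_greatest monoD[of f] Inf_lower)
  have "g (Inf (f ` S)) \<le> Inf S"
    using monoD[OF assms(2)] assms(3) by (metis INF_lower Inf_greatest)
  then show "Inf (f ` S) \<le> f (Inf S)" using monoD[OF assms(1)] assms(4) by metis
qed

lemma mono_inverse_Sup:
  fixes f :: "'a::complete_lattice \<Rightarrow> 'b::complete_lattice" and g :: "'b \<Rightarrow> 'a"
  assumes "mono f" "mono g" "\<And>x. g (f x) = x" "\<And>y. f (g y) = y"
  shows "f (Sup S) = Sup (f ` S)"
proof (rule antisym)
  show "Sup (f ` S) \<le> f (Sup S)"
    using assms(1) by (auto intro!: Sup_least monoD[of f] Sup_upper)
  have "Sup S \<le> g (Sup (f ` S))"
    using monoD[OF assms(2)] assms(3) by (metis SUP_upper Sup_least)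
  then show "f (Sup S) \<le> Sup (f ` S)" using monoD[OF assms(1)] assms(4) by metis
qed

lemma ennreal_mult_Inf:
  fixes w :: ennreal
  assumes "w < \<infinity>" "S \<noteq> {}"
  shows "w * Inf S = Inf ((*) w ` S)"
proof (cases "w = 0")
  case True
  then show ?thesis using assms(2) by (simp add: image_constant_conv)
next
  case False
  have "mono ((*) w)" "mono (\<lambda>x. x / w)"
    by (auto intro!: monoI mult_left_mono divide_right_mono_ennreal)
  then show ?thesis
    using mono_inverse_Inf[of "(*) w" "\<lambda>x. x / w"] False assms
    by (simp add: mult.commute mult_divide_eq_ennreal ennreal_times_divide)
qed

lemma ennreal_less_iff_pos: "0 < b \<Longrightarrow> ennreal z < ennreal b \<longleftrightarrow> z < b"
  by (cases "z \<le> 0") (auto simp: ennreal_less_iff ennreal_lessI ennreal_eq_0_iff)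

lemma epowr_mono: "0 < q \<Longrightarrow> x \<le> y \<Longrightarrow> epowr x q \<le> epowr y q"
  unfolding epowr_def
  by (auto simp: top_unique enn2real_mono powr_mono2 ennreal_leI less_top)

lemma epowr_epowr_inverse: "0 < q \<Longrightarrow> epowr (epowr x q) (1 / q) = x"
  unfolding epowr_def by (auto simp: powr_powr ennreal_enn2real_if)

lemma epowr_0 [simp]: "epowr 0 q = 0"
  unfolding epowr_def by simp

lemma epowr_eq_top_iff: "epowr x q = \<infinity> \<longleftrightarrow> x = \<infinity>"
  unfolding epowr_def by auto

lemma epowr_pos: "0 < q \<Longrightarrow> 0 < x \<Longrightarrow> 0 < epowr x q"
  unfolding epowr_def by (auto simp: enn2real_positive_iff enn2real_eq_0_iff less_top)

lemma
  assumes "0 < q"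
  shows epowr_Inf: "epowr (Inf S) q = Inf ((\<lambda>x. epowr x q) ` S)"
    and epowr_Sup: "epowr (Sup S) q = Sup ((\<lambda>x. epowr x q) ` S)"
proof -
  have "mono (\<lambda>x. epowr x q)" "mono (\<lambda>x. epowr x (1 / q))"
    using assms by (auto intro!: monoI epowr_mono)
  moreover have "epowr (epowr y (1 / q)) q = y" for y
    using epowr_epowr_inverse[of "1 / q" y] assms by simp
  ultimately show "epowr (Inf S) q = Inf ((\<lambda>x. epowr x q) ` S)"
    and "epowr (Sup S) q = Sup ((\<lambda>x. epowr x q) ` S)"
    using mono_inverse_Inf mono_inverse_Sup epowr_epowr_inverse[OF assms] by blast+
qed

section \<open>Growth chains of two regular functions\<close>

text \<open>The last two clauses are left-continuity, and right-continuity at every point to the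
  right of which \<open>f\<close> is still finite somewhere.\<close>
definition regular_mono :: "(ennreal \<Rightarrow> ennreal) \<Rightarrow> bool" where
  "regular_mono f \<longleftrightarrow> mono f \<and> f 0 = 0 \<and>
     (\<forall>T e. e < f T \<longrightarrow> (\<exists>y<T. e < f y)) \<and>
     (\<forall>x y e. x < y \<longrightarrow> f y < \<infinity> \<longrightarrow> f x < e \<longrightarrow> (\<exists>z>x. f z < e))"

lemma regular_monoD:
  assumes "regular_mono f"
  shows "mono f" "f 0 = 0"
    and "e < f T \<Longrightarrow> \<exists>y<T. e < f y"
  using assms unfolding regular_mono_def by auto

lemma regular_mono_right:
  assumes f: "regular_mono f" and "x < y" "f y < \<infinity>" "f x < e" "x < b"
  shows "\<exists>z. x < z \<and> z < b \<and> f z < e"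
proof -
  obtain z where z: "x < z" "f z < e" using f assms(2-4) unfolding regular_mono_def by blast
  obtain z' where z': "x < z'" "z' < min z b" using dense[of x "min z b"] z assms(5) by auto
  have "f z' \<le> f z" using z' monoD[OF regular_monoD(1)[OF f], of z' z] by auto
  then show ?thesis using z z' by auto
qed

lemma regular_mono_Sup_le:
  assumes f: "regular_mono f" and le: "\<And>s. s \<in> S \<Longrightarrow> f s \<le> c"
  shows "f (Sup S) \<le> c"
proof (rule ccontr)
  assume "\<not> f (Sup S) \<le> c"
  then obtain y where "y < Sup S" "c < f y" using regular_monoD(3)[OF f] by (meson not_le)
  then obtain s where "s \<in> S" "y < s" by (auto simp: less_Sup_iff)
  then have "f y \<le> c"
    using le monoD[OF regular_monoD(1)[OF f], of y s] by (meson less_imp_le order_trans)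
  then show False using \<open>c < f y\<close> by simp
qed

lemma regular_mono_le_Inf:
  assumes f: "regular_mono f" and "Inf S < y" "f y < \<infinity>" and le: "\<And>s. s \<in> S \<Longrightarrow> c \<le> f s"
  shows "c \<le> f (Inf S)"
proof (rule ccontr)
  assume "\<not> c \<le> f (Inf S)"
  then obtain z where "Inf S < z" "f z < c"
    using f assms(2,3) unfolding regular_mono_def by (meson not_le)
  then obtain s where "s \<in> S" "s < z" by (auto simp: Inf_less_iff)
  then have "c \<le> f z"
    using le monoD[OF regular_monoD(1)[OF f], of s z] by (meson less_imp_le order_trans)
  then show False using \<open>f z < c\<close> by simp
qed

locale growth_pair =
  fixes F G :: "ennreal \<Rightarrow> ennreal" and C :: ennreal
  assumes C_gt_1: "1 < C" and C_finite: "C < \<infinity>"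
    and regular_F: "regular_mono F" and regular_G: "regular_mono G"
    and F_pos: "\<And>x. 0 < x \<Longrightarrow> 0 < F x"
    and G_pos: "\<And>x. 0 < x \<Longrightarrow> 0 < G x"
    and G_finite: "\<And>x. x < \<infinity> \<Longrightarrow> G x < \<infinity>"
    and F_finite: "\<And>x. G \<infinity> = \<infinity> \<Longrightarrow> x < \<infinity> \<Longrightarrow> F x < \<infinity>"
begin

definition growth_step :: "ennreal \<Rightarrow> ennreal \<Rightarrow> bool" where
  "growth_step s t \<longleftrightarrow> 0 < s \<and> s < t \<and> C * F s \<le> F t \<and> C * G s \<le> G t \<and>
     (F t = C * F s \<or> G t = C * G s)"

lemma C_pos: "0 < C"
  using order.strict_trans[OF zero_less_one C_gt_1] .

lemmas mult_C_le_iff = ennreal_le_divide_iff[OF C_pos C_finite, symmetric]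
lemmas mult_C_less_iff = ennreal_less_divide_iff[OF C_pos C_finite, symmetric]

lemma F_mono: "x \<le> y \<Longrightarrow> F x \<le> F y"
  using regular_monoD(1)[OF regular_F] by (rule monoD)

lemma G_mono: "x \<le> y \<Longrightarrow> G x \<le> G y"
  using regular_monoD(1)[OF regular_G] by (rule monoD)

lemma exists_below:
  assumes "x < T" "C * F x < F T" "C * G x < G T"
  shows "\<exists>y. x < y \<and> y < T \<and> C * F y \<le> F T \<and> C * G y \<le> G T"
proof -
  obtain y0 where y0: "x < y0" "y0 < T" using dense assms(1) by blast
  have "G y0 < \<infinity>" using G_finite y0(2) by (simp add: less_top order_less_le_trans)
  then obtain y1 where y1: "x < y1" "y1 < T" "G y1 < G T / C"
    using regular_mono_right[OF regular_G y0(1) _ _ assms(1)] assms(3) by (auto simp: mult_C_less_iff)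
  show ?thesis
  proof (cases "F T = \<infinity>")
    case True
    then show ?thesis using y1 by (auto simp: mult_C_le_iff intro: less_imp_le)
  next
    case False
    then obtain y where y: "x < y" "y < y1" "F y < F T / C"
      using regular_mono_right[OF regular_F assms(1) _ _ y1(1)] assms(2)
      by (auto simp: mult_C_less_iff top.not_eq_extremum)
    have "G y \<le> G T / C" using G_mono[of y y1] y(2) y1(3) by (meson less_imp_le order_trans)
    then show ?thesis using y y1 by (auto simp: mult_C_le_iff intro: less_imp_le)
  qed
qed

lemma exists_above:
  assumes "x < y" "C * F x < F y" "C * G x < G y"
  shows "\<exists>z. x < z \<and> z < y \<and> C * F x \<le> F z \<and> C * G x \<le> G z"
proof -
  obtain z1 where z1: "z1 < y" "C * F x < F z1" using regular_monoD(3)[OF regular_F] assms(2) by blast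
  obtain z2 where z2: "z2 < y" "C * G x < G z2" using regular_monoD(3)[OF regular_G] assms(3) by blast
  define z where "z = max z1 z2"
  have Fz: "C * F x < F z" using z1 F_mono[of z1 z] by (simp add: z_def order_less_le_trans)
  have "C * G x < G z" using z2 G_mono[of z2 z] by (simp add: z_def order_less_le_trans)
  moreover have "x < z"
  proof (rule ccontr)
    assume "\<not> x < z"
    then have "F z \<le> 1 * F x" using F_mono by (simp add: not_less)
    also have "\<dots> \<le> C * F x" using C_gt_1 by (intro mult_right_mono) auto
    finally show False using Fz by simp
  qed
  ultimately show ?thesis using Fz z1 z2 by (auto simp: z_def intro: less_imp_le)
qed

lemma exists_step_down:
  assumes T: "0 < T" and fin: "F T < \<infinity> \<or> G T < \<infinity>"
  shows "\<exists>s. growth_step s T"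
proof -
  define S where "S = {s. s < T \<and> C * F s \<le> F T \<and> C * G s \<le> G T}"
  have "C * F 0 < F T" "C * G 0 < G T"
    using F_pos[OF T] G_pos[OF T] regular_monoD(2)[OF regular_F] regular_monoD(2)[OF regular_G]
    by simp_all
  then obtain s0 where s0: "0 < s0" "s0 \<in> S" using exists_below[OF T] by (auto simp: S_def)
  define s where "s = Sup S"
  have s_pos: "0 < s" using s0 Sup_upper[of s0 S] by (simp add: s_def order_less_le_trans)
  have "s \<le> T" unfolding s_def S_def by (auto intro: Sup_least less_imp_le)
  have CF: "C * F s \<le> F T"
    unfolding s_def mult_C_le_iff
    by (rule regular_mono_Sup_le[OF regular_F]) (simp add: S_def mult_C_le_iff)
  have CG: "C * G s \<le> G T"
    unfolding s_def mult_C_le_iff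
    by (rule regular_mono_Sup_le[OF regular_G]) (simp add: S_def mult_C_le_iff)
  have "s < T"
  proof (rule ccontr)
    assume "\<not> s < T"
    then have "s = T" using \<open>s \<le> T\<close> by simp
    then show False
      using CF CG fin ennreal_less_mult[OF C_gt_1 F_pos[OF T]] ennreal_less_mult[OF C_gt_1 G_pos[OF T]]
      by (auto simp: not_le[symmetric])
  qed
  have "F T = C * F s \<or> G T = C * G s"
  proof (rule ccontr)
    assume "\<not> ?thesis"
    then have "C * F s < F T" "C * G s < G T" using CF CG by auto
    then obtain y where "s < y" "y \<in> S" using exists_below[OF \<open>s < T\<close>] by (auto simp: S_def)
    then show False using Sup_upper[of y S] by (simp add: s_def)
  qed
  then show ?thesis using s_pos \<open>s < T\<close> CF CG by (auto simp: growth_step_def)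
qed

lemma exists_step_up:
  assumes GI: "G \<infinity> = \<infinity>" and FI: "F \<infinity> = \<infinity>" and x: "0 < x" "x < \<infinity>"
  shows "\<exists>y<\<infinity>. growth_step x y"
proof -
  have Fx: "0 < F x" "F x < \<infinity>" using F_pos[OF x(1)] F_finite[OF GI x(2)] by auto
  have Gx: "0 < G x" "G x < \<infinity>" using G_pos[OF x(1)] G_finite[OF x(2)] by auto
  have "C * F x < F \<infinity>" "C * G x < G \<infinity>"
    using FI GI Fx Gx C_finite by (simp_all add: ennreal_mult_less_top)
  define S where "S = {y. x < y \<and> C * F x \<le> F y \<and> C * G x \<le> G y}"
  obtain z where z: "z \<in> S" "z < \<infinity>" using exists_above[OF x(2)] \<open>C * F x < F \<infinity>\<close> \<open>C * G x < G \<infinity>\<close>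
    by (auto simp: S_def)
  define y where "y = Inf S"
  have "x \<le> y" unfolding y_def S_def by (auto intro: Inf_greatest less_imp_le)
  have "y < \<infinity>" using Inf_lower[OF z(1)] z(2) by (simp add: y_def)
  then obtain w where w: "y < w" "w < \<infinity>" using dense by blast
  have CF: "C * F x \<le> F y"
    unfolding y_def using w F_finite[OF GI w(2)]
    by (intro regular_mono_le_Inf[OF regular_F]) (auto simp: S_def y_def)
  have CG: "C * G x \<le> G y"
    unfolding y_def using w G_finite[OF w(2)]
    by (intro regular_mono_le_Inf[OF regular_G]) (auto simp: S_def y_def)
  have "x < y"
    using \<open>x \<le> y\<close> CF ennreal_less_mult[OF C_gt_1 Fx] by (auto simp: order_le_less)
  have "F y = C * F x \<or> G y = C * G x"
  proof (rule ccontr)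
    assume "\<not> ?thesis"
    then have "C * F x < F y" "C * G x < G y" using CF CG by auto
    then obtain z where "z < y" "z \<in> S" using exists_above[OF \<open>x < y\<close>] by (auto simp: S_def)
    then show False using Inf_lower[of z S] by (simp add: y_def)
  qed
  then show ?thesis using x \<open>x < y\<close> \<open>y < \<infinity>\<close> CF CG by (auto simp: growth_step_def)
qed

lemma descending_chain:
  assumes "0 < T" "F T < \<infinity> \<or> G T < \<infinity>"
  shows "\<exists>d. d 0 = T \<and> (\<forall>n. growth_step (d (Suc n)) (d n))"
proof -
  have "\<exists>d. \<forall>n. (0 < d n \<and> (F (d n) < \<infinity> \<or> G (d n) < \<infinity>) \<and> (n = 0 \<longrightarrow> d n = T)) \<and>
      growth_step (d (Suc n)) (d n)"
  proof (rule dependent_nat_choice)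
    fix t and n :: nat assume t: "0 < t \<and> (F t < \<infinity> \<or> G t < \<infinity>) \<and> (n = 0 \<longrightarrow> t = T)"
    then obtain s where s: "growth_step s t" using exists_step_down by blast
    then have "s < \<infinity>" by (auto simp: growth_step_def less_top intro: order_less_le_trans)
    then show "\<exists>s. (0 < s \<and> (F s < \<infinity> \<or> G s < \<infinity>) \<and> (Suc n = 0 \<longrightarrow> s = T)) \<and> growth_step s t"
      using s G_finite by (auto simp: growth_step_def)
  qed (use assms in blast)
  then show ?thesis by blast
qed

lemma ascending_chain:
  assumes "G \<infinity> = \<infinity>" "F \<infinity> = \<infinity>" "0 < x" "x < \<infinity>"
  shows "\<exists>a. a 0 = x \<and> (\<forall>n. a n < \<infinity> \<and> growth_step (a n) (a (Suc n)))"
proof -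
  have "\<exists>a. \<forall>n. (0 < a n \<and> a n < \<infinity> \<and> (n = 0 \<longrightarrow> a n = x)) \<and> growth_step (a n) (a (Suc n))"
  proof (rule dependent_nat_choice)
    fix t and n :: nat assume "0 < t \<and> t < \<infinity> \<and> (n = 0 \<longrightarrow> t = x)"
    then obtain y where "y < \<infinity>" "growth_step t y" using exists_step_up assms(1,2) by blast
    moreover have "0 < y" using \<open>growth_step t y\<close> by (auto simp: growth_step_def)
    ultimately show "\<exists>y. (0 < y \<and> y < \<infinity> \<and> (Suc n = 0 \<longrightarrow> y = x)) \<and> growth_step t y"
      by blast
  qed (use assms in blast)
  then show ?thesis by blast
qed

lemma exists_growth_chain:
  "\<exists>K::ereal. K \<in> {0, \<infinity>} \<and> (\<exists>t::int \<Rightarrow> ennreal.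
     (K = 0 \<longrightarrow> t 0 = \<infinity>) \<and>
     (\<forall>k \<in> Kset K. growth_step (t (k - 1)) (t k)) \<and>
     (\<forall>k \<in> Kset K - {k. ereal (of_int k) = K}. t k < \<infinity>))"
proof (cases "F \<infinity> < \<infinity> \<or> G \<infinity> < \<infinity>")
  case True
  then have "\<exists>d. d 0 = \<infinity> \<and> (\<forall>n. growth_step (d (Suc n)) (d n))"
    by (intro descending_chain) simp_all
  then obtain d where d: "d 0 = \<infinity>" "\<And>n. growth_step (d (Suc n)) (d n)" by blast
  define t where "t k = d (nat (- k))" for k :: int
  have "growth_step (t (k - 1)) (t k)" if "k \<le> 0" for k
  proof -
    have "nat (- (k - 1)) = Suc (nat (- k))" using that by simp
    then show ?thesis using d(2)[of "nat (- k)"] by (simp add: t_def)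
  qed
  moreover have "t k < \<infinity>" if "k < 0" for k
  proof -
    have "nat (- k) = Suc (nat (- k - 1))" using that by simp
    then show ?thesis
      using d(2)[of "nat (- k - 1)"]
      by (auto simp: t_def growth_step_def less_top intro: order_less_le_trans)
  qed
  moreover have "Kset 0 = {k. k \<le> 0}" "{k. ereal (of_int k) = 0} = {0}" by (auto simp: Kset_def)
  ultimately have "(0::ereal) = 0 \<longrightarrow> t 0 = \<infinity>" "\<forall>k \<in> Kset 0. growth_step (t (k - 1)) (t k)"
    "\<forall>k \<in> Kset 0 - {k. ereal (of_int k) = 0}. t k < \<infinity>"
    using d(1) by (auto simp: t_def)
  then show ?thesis by (intro exI[of _ "0::ereal"]) blast
next
  case False
  then have GI: "G \<infinity> = \<infinity>" and FI: "F \<infinity> = \<infinity>" by (simp_all add: not_less top_unique)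
  have "\<exists>d. d 0 = 1 \<and> (\<forall>n. growth_step (d (Suc n)) (d n))"
    using G_finite[of 1] by (intro descending_chain) simp_all
  then obtain d where d: "d 0 = 1" "\<And>n. growth_step (d (Suc n)) (d n)" by blast
  have "\<exists>a. a 0 = 1 \<and> (\<forall>n. a n < \<infinity> \<and> growth_step (a n) (a (Suc n)))"
    by (intro ascending_chain GI FI) simp_all
  then obtain a where a: "a 0 = 1" "\<And>n. a n < \<infinity> \<and> growth_step (a n) (a (Suc n))" by blast
  define t where "t k = (if 0 \<le> k then a (nat k) else d (nat (- k)))" for k :: int
  have d_fin: "d n < \<infinity>" for n
  proof (cases n)
    case (Suc m)
    then show ?thesis
      using d(2)[of m] by (auto simp: growth_step_def less_top intro: order_less_le_trans)
  qed (simp add: d(1))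
  have "growth_step (t (k - 1)) (t k) \<and> t k < \<infinity>" for k
  proof (cases "0 < k")
    case True
    then have "nat k = Suc (nat (k - 1))" by simp
    then show ?thesis using a(2)[of "nat (k - 1)"] a(2)[of "nat k"] True by (simp add: t_def)
  next
    case False
    then have "nat (- (k - 1)) = Suc (nat (- k))" by simp
    moreover have "t k = d (nat (- k))" using False a(1) d(1) by (simp add: t_def)
    ultimately show ?thesis using d(2)[of "nat (- k)"] d_fin False by (simp add: t_def)
  qed
  then have "\<forall>k \<in> Kset \<infinity>. growth_step (t (k - 1)) (t k)"
    "\<forall>k \<in> Kset \<infinity> - {k. ereal (of_int k) = \<infinity>}. t k < \<infinity>"
    by (simp_all add: Kset_def)
  then show ?thesis by (intro exI[of _ "\<infinity>::ereal"]) auto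
qed

theorem growth_chain_partition:
  "\<exists>K::ereal. K \<in> {0, \<infinity>} \<and>
    (\<exists>(K1::int set) K2 (t::int \<Rightarrow> ennreal).
       K1 \<inter> K2 = {} \<and> K1 \<union> K2 = Kset K \<and>
       (\<forall>k \<in> Kset K - {k. ereal (of_int k) = K}.
          0 < t (k - 1) \<and> t (k - 1) \<le> t k \<and> t k < \<infinity>) \<and>
       (K = 0 \<longrightarrow> t 0 = \<infinity>) \<and>
       (\<forall>k \<in> Kset K. F (t k) \<ge> C * F (t (k - 1)) \<and> G (t k) \<ge> C * G (t (k - 1))) \<and>
       (\<forall>k \<in> K1. F (t k) = C * F (t (k - 1))) \<and>
       (\<forall>k \<in> K2. G (t k) = C * G (t (k - 1))))"
proof -
  obtain K t where K: "K \<in> {0, \<infinity>}" and t0: "K = 0 \<longrightarrow> t 0 = \<infinity>"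
    and step: "\<And>k. k \<in> Kset K \<Longrightarrow> growth_step (t (k - 1)) (t k)"
    and fin: "\<And>k. k \<in> Kset K - {k. ereal (of_int k) = K} \<Longrightarrow> t k < \<infinity>"
    using exists_growth_chain by blast
  define K1 where "K1 = {k \<in> Kset K. F (t k) = C * F (t (k - 1))}"
  have "K1 \<inter> (Kset K - K1) = {}" "K1 \<union> (Kset K - K1) = Kset K" by (auto simp: K1_def)
  moreover have "\<forall>k \<in> Kset K - {k. ereal (of_int k) = K}. 0 < t (k - 1) \<and> t (k - 1) \<le> t k \<and> t k < \<infinity>"
    using step fin unfolding growth_step_def by (blast intro: less_imp_le)
  moreover have "\<forall>k \<in> Kset K. F (t k) \<ge> C * F (t (k - 1)) \<and> G (t k) \<ge> C * G (t (k - 1))"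
    using step unfolding growth_step_def by blast
  moreover have "\<forall>k \<in> K1. F (t k) = C * F (t (k - 1))" by (simp add: K1_def)
  moreover have "\<forall>k \<in> Kset K - K1. G (t k) = C * G (t (k - 1))"
    using step unfolding K1_def growth_step_def by blast
  ultimately show ?thesis
    using K t0 by (intro exI[of _ K]) blast
qed

end

section \<open>Interval integrals\<close>

definition Ioo_integral :: "(real \<Rightarrow> ennreal) \<Rightarrow> real \<Rightarrow> ennreal \<Rightarrow> ennreal" where
  "Ioo_integral f s T = (\<integral>\<^sup>+ x. f x * indicator {x. s < x \<and> ennreal x < T} x \<partial>lborel)"

lemma Ioo_integrand_measurable:
  fixes f :: "real \<Rightarrow> ennreal"
  assumes "f \<in> borel_measurable lborel"
  shows "(\<lambda>x. f x * indicator {x. s < x \<and> ennreal x < T} x) \<in> borel_measurable lborel"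
proof -
  have "is_interval {x::real. s < x \<and> ennreal x < T}"
    unfolding is_interval_1 by (auto intro: order_le_less_trans[OF ennreal_leI])
  then have "{x::real. s < x \<and> ennreal x < T} \<in> sets borel"
    by (rule real_interval_borel_measurable)
  then show ?thesis
    using assms by (intro borel_measurable_times_ennreal borel_measurable_indicator) simp_all
qed

lemma Ioo_integral_mono: "s' \<le> s \<Longrightarrow> T \<le> T' \<Longrightarrow> Ioo_integral f s T \<le> Ioo_integral f s' T'"
  unfolding Ioo_integral_def
  by (intro nn_integral_mono mult_left_mono) (auto split: split_indicator intro: order_less_le_trans)

lemma Ioo_integral_eq_0: "T \<le> ennreal s \<Longrightarrow> Ioo_integral f s T = 0"
proof -
  assume T: "T \<le> ennreal s"
  have "\<not> ennreal x < T" if "s < x" for x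
    using T ennreal_leI[of s x] that by (simp add: not_less)
  then have "{x. s < x \<and> ennreal x < T} = {}" by blast
  then show ?thesis unfolding Ioo_integral_def by simp
qed

lemma SUP_mult_indicator:
  fixes c :: ennreal
  shows "(SUP n. c * indicator (B n) x) = c * indicator (\<Union>n. B n) x"
proof (cases "x \<in> (\<Union>n. B n)")
  case True
  then obtain n where "x \<in> B n" by blast
  then have "(SUP n. c * indicator (B n) x) = c"
    by (intro antisym SUP_least SUP_upper2[of n]) (auto split: split_indicator)
  then show ?thesis using True by simp
qed simp

lemma INF_mult_indicator:
  fixes c :: ennreal
  shows "(INF n. c * indicator (B n) x) = c * indicator (\<Inter>n. B n) x"
proof (cases "x \<in> (\<Inter>n. B n)")
  case False
  then obtain n where "x \<notin> B n" by blast
  then have "(INF n. c * indicator (B n) x) = 0"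
    by (intro antisym INF_lower2[of n]) auto
  then show ?thesis using False by simp
qed simp

definition lower_approx :: "ennreal \<Rightarrow> nat \<Rightarrow> real" where
  "lower_approx T n = (if T = \<infinity> then real n + 1 else enn2real T * (1 - 1 / (real n + 2)))"

lemma
  assumes "0 < T"
  shows lower_approx_pos: "0 < lower_approx T n"
    and lower_approx_less: "ennreal (lower_approx T n) < T"
    and incseq_lower_approx: "incseq (lower_approx T)"
proof -
  have frac: "0 < 1 - 1 / (real n + 2)" "1 - 1 / (real n + 2) < 1"
    "1 - 1 / (real n + 2) \<le> 1 - 1 / (real (Suc n) + 2)" for n
    by (simp_all add: field_simps)
  have "T \<noteq> \<infinity> \<Longrightarrow> 0 < enn2real T" using assms by (simp add: enn2real_positive_iff less_top)
  then show "0 < lower_approx T n" using frac by (simp add: lower_approx_def)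
  show "ennreal (lower_approx T n) < T"
    using frac(2)[of n] \<open>T \<noteq> \<infinity> \<Longrightarrow> 0 < enn2real T\<close> assms
    by (cases T) (auto simp: lower_approx_def ennreal_less_iff_pos)
  show "incseq (lower_approx T)"
    using frac(3) by (intro incseq_SucI) (simp add: lower_approx_def mult_left_mono)
qed

lemma lower_approx_exhausts:
  assumes "0 < T" "ennreal x < T"
  shows "\<exists>n. x < lower_approx T n"
proof (cases "x \<le> 0 \<or> T = \<infinity>")
  case True
  obtain n where "x < real n" using reals_Archimedean2 by blast
  then have "T = \<infinity> \<Longrightarrow> x < lower_approx T n" by (simp add: lower_approx_def)
  then show ?thesis
    using True lower_approx_pos[OF assms(1), of 0] by (meson le_less_trans)
next
  case False
  then obtain t where t: "T = ennreal t" "0 < x" "x < t"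
    using assms by (cases T) (auto simp: ennreal_less_iff)
  obtain n where n: "t / (t - x) < real n" using reals_Archimedean2 by blast
  have "t < real n * (t - x)" using n t by (simp add: field_simps)
  also have "\<dots> \<le> (real n + 2) * (t - x)" using t by (intro mult_right_mono) auto
  finally have "x < t * (1 - 1 / (real n + 2))" by (simp add: field_simps)
  then show ?thesis using t by (auto simp: lower_approx_def)
qed

lemma Ioo_integral_SUP:
  fixes f :: "real \<Rightarrow> ennreal"
  assumes f: "f \<in> borel_measurable lborel" and T: "0 < T"
  shows "Ioo_integral f s T = (SUP n. Ioo_integral f s (ennreal (lower_approx T n)))"
proof -
  let ?B = "\<lambda>n. {x. s < x \<and> ennreal x < ennreal (lower_approx T n)}"
  have "ennreal z < T" if "z < lower_approx T n" for z n
    using lower_approx_less[OF T, of n] ennreal_leI[of z "lower_approx T n"] that by simp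
  then have "(\<Union>n. ?B n) = {x. s < x \<and> ennreal x < T}"
    using lower_approx_exhausts[OF T] lower_approx_pos[OF T] by (auto simp: ennreal_less_iff_pos)
  then have pointwise:
    "(SUP n. f x * indicator (?B n) x) = f x * indicator {x. s < x \<and> ennreal x < T} x" for x
    by (simp add: SUP_mult_indicator)
  have "incseq (\<lambda>n x. f x * indicator (?B n) x)"
    using incseq_lower_approx[OF T]
    by (intro incseq_SucI le_funI mult_left_mono)
      (auto split: split_indicator intro: order_less_le_trans ennreal_leI dest: incseq_SucD)
  then have "(\<integral>\<^sup>+ x. (SUP n. f x * indicator (?B n) x) \<partial>lborel)
      = (SUP n. Ioo_integral f s (ennreal (lower_approx T n)))"
    unfolding Ioo_integral_def
    by (rule nn_integral_monotone_convergence_SUP[OF _ Ioo_integrand_measurable[OF f]])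
  then show ?thesis unfolding pointwise Ioo_integral_def .
qed

lemma Ioo_integral_INF:
  fixes f :: "real \<Rightarrow> ennreal"
  assumes f: "f \<in> borel_measurable lborel" and "0 \<le> s" and x: "0 \<le> x" "x < y"
    and fin: "Ioo_integral f s (ennreal y) < \<infinity>"
  shows "Ioo_integral f s (ennreal x)
    = (INF n. Ioo_integral f s (ennreal (x + (y - x) / (real n + 1))))"
proof -
  define xs where "xs n = x + (y - x) / (real n + 1)" for n
  have xs: "x < xs n" "0 < xs n" "xs (Suc n) \<le> xs n" for n
    using x by (auto simp: xs_def frac_le add_nonneg_pos)
  let ?B = "\<lambda>n. {z. s < z \<and> ennreal z < ennreal (xs n)}"
  have "z \<le> x" if "\<And>n. z < xs n" for z
  proof (rule ccontr)
    assume "\<not> z \<le> x"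
    then have "0 < z - x" by simp
    then obtain n where "(y - x) / (z - x) < real n + 1"
      using reals_Archimedean2 by (metis add.commute less_add_one order.strict_trans)
    then have "xs n < z" using \<open>0 < z - x\<close> by (simp add: xs_def field_simps)
    then show False using that[of n] by simp
  qed
  then have "(\<Inter>n. ?B n) = {z. s < z \<and> z \<le> x}"
    using xs by (auto simp: ennreal_less_iff_pos intro: le_less_trans)
  then have pointwise: "(INF n. f z * indicator (?B n) z) = f z * indicator {z. s < z \<and> z \<le> x} z" for z
    by (simp add: INF_mult_indicator)
  have "AE z in lborel. f z * indicator {z. s < z \<and> ennreal z < ennreal x} z
      = f z * indicator {z. s < z \<and> z \<le> x} z"
    using AE_lborel_singleton[of x]
    by eventually_elim (use \<open>0 \<le> s\<close> in \<open>auto split: split_indicator simp: ennreal_less_iff\<close>)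
  then have "Ioo_integral f s (ennreal x) = (\<integral>\<^sup>+ z. (INF n. f z * indicator (?B n) z) \<partial>lborel)"
    unfolding Ioo_integral_def pointwise by (rule nn_integral_cong_AE)
  also have "\<dots> = (INF n. Ioo_integral f s (ennreal (xs n)))"
    unfolding Ioo_integral_def
  proof (rule nn_integral_monotone_convergence_INF_decseq[OF _ Ioo_integrand_measurable[OF f]])
    show "decseq (\<lambda>n z. f z * indicator (?B n) z)"
      using xs(3) by (intro decseq_SucI le_funI mult_left_mono)
        (auto split: split_indicator intro: order_less_le_trans ennreal_leI)
    show "(\<integral>\<^sup>+ z. f z * indicator (?B 0) z \<partial>lborel) < \<infinity>"
      using fin by (simp add: xs_def Ioo_integral_def)
  qed
  finally show ?thesis by (simp add: xs_def)
qed

lemma regular_monoI_approx: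
  assumes f: "mono f" "f 0 = 0"
    and SUP: "\<And>T. 0 < T \<Longrightarrow> f T = (SUP n. f (ennreal (lower_approx T n)))"
    and INF: "\<And>x y. 0 \<le> x \<Longrightarrow> x < y \<Longrightarrow> f (ennreal y) < \<infinity> \<Longrightarrow>
      f (ennreal x) = (INF n. f (ennreal (x + (y - x) / (real n + 1))))"
  shows "regular_mono f"
  unfolding regular_mono_def
proof (intro conjI allI impI f)
  fix T e assume e: "e < f T"
  then have T: "0 < T" using f(2) by (cases "T = 0") (auto simp: zero_less_iff_neq_zero)
  then obtain n where "e < f (ennreal (lower_approx T n))" using e SUP by (auto simp: less_SUP_iff)
  then show "\<exists>y<T. e < f y" using lower_approx_less[OF T] by blast
next
  fix x y e assume xy: "x < y" "f y < \<infinity>" "f x < e"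
  obtain z where z: "x < z" "z < y" using dense xy(1) by blast
  then obtain xr zr where r: "x = ennreal xr" "0 \<le> xr" "z = ennreal zr" "xr < zr"
    by (cases x; cases z) (auto simp: top_unique ennreal_less_iff)
  have "f (ennreal zr) < \<infinity>"
    using xy(2) monoD[OF f(1), of z y] z r(3) by (metis less_imp_le order_le_less_trans)
  then have "(INF n. f (ennreal (xr + (zr - xr) / (real n + 1)))) < e"
    using INF[OF r(2,4)] xy(3) r(1) by simp
  then obtain n where "f (ennreal (xr + (zr - xr) / (real n + 1))) < e" by (auto simp: INF_less_iff)
  moreover have "x < ennreal (xr + (zr - xr) / (real n + 1))"
    using r by (simp add: ennreal_less_iff)
  ultimately show "\<exists>z>x. f z < e" by blast
qed

lemma regular_mono_Ioo_integral:
  assumes "f \<in> borel_measurable lborel" "0 \<le> s"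
  shows "regular_mono (Ioo_integral f s)"
  using Ioo_integral_SUP[OF assms(1)] Ioo_integral_INF[OF assms]
  by (intro regular_monoI_approx monoI Ioo_integral_mono Ioo_integral_eq_0) auto

definition fund_integral :: "(real \<Rightarrow> ennreal) \<Rightarrow> (real \<Rightarrow> ennreal) \<Rightarrow> real \<Rightarrow> ennreal \<Rightarrow> ennreal" where
  "fund_integral w g a T = (\<integral>\<^sup>+ s. w s * epowr (Ioo_integral g s T) a \<partial>lborel)"

lemma antimono_borel_measurable:
  fixes g :: "real \<Rightarrow> ennreal"
  assumes "\<And>x y. x \<le> y \<Longrightarrow> g y \<le> g x"
  shows "g \<in> borel_measurable lborel"
proof -
  have "g \<in> borel_measurable borel"
  proof (rule borel_measurableI_greater)
    fix c
    have "is_interval {x. c < g x}"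
      unfolding is_interval_1 using assms by (auto intro: order_less_le_trans)
    then show "{x \<in> space borel. c < g x} \<in> sets borel"
      using real_interval_borel_measurable by simp
  qed
  then show ?thesis by simp
qed

lemma fund_integrand_measurable:
  assumes "w \<in> borel_measurable lborel" "0 < a"
  shows "(\<lambda>s. w s * epowr (Ioo_integral g s T) a) \<in> borel_measurable lborel"
  by (rule borel_measurable_times_ennreal[OF assms(1) antimono_borel_measurable])
    (auto intro!: epowr_mono Ioo_integral_mono assms(2))

lemma fund_integral_mono: "0 < a \<Longrightarrow> T \<le> T' \<Longrightarrow> fund_integral w g a T \<le> fund_integral w g a T'"
  unfolding fund_integral_def
  by (intro nn_integral_mono mult_left_mono epowr_mono Ioo_integral_mono) auto

lemma fund_integral_SUP:
  assumes w: "w \<in> borel_measurable lborel" and g: "g \<in> borel_measurable lborel"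
    and a: "0 < a" and T: "0 < T"
  shows "fund_integral w g a T = (SUP n. fund_integral w g a (ennreal (lower_approx T n)))"
proof -
  have pointwise: "w s * epowr (Ioo_integral g s T) a
      = (SUP n. w s * epowr (Ioo_integral g s (ennreal (lower_approx T n))) a)" for s
    unfolding Ioo_integral_SUP[OF g T] epowr_Sup[OF a] SUP_mult_left_ennreal image_image ..
  have "incseq (\<lambda>n s. w s * epowr (Ioo_integral g s (ennreal (lower_approx T n))) a)"
    using incseq_lower_approx[OF T]
    by (intro incseq_SucI le_funI mult_left_mono epowr_mono Ioo_integral_mono a ennreal_leI)
      (auto dest: incseq_SucD)
  then show ?thesis
    unfolding fund_integral_def pointwise
    by (rule nn_integral_monotone_convergence_SUP[OF _ fund_integrand_measurable[OF w a]])
qed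

lemma fund_integral_INF:
  assumes w: "w \<in> borel_measurable lborel" and g: "g \<in> borel_measurable lborel" and a: "0 < a"
    and w_fin: "\<And>s. w s < \<infinity>" and w_0: "\<And>s. s \<le> 0 \<Longrightarrow> w s = 0"
    and x: "0 \<le> x" "x < y" and fin: "fund_integral w g a (ennreal y) < \<infinity>"
  shows "fund_integral w g a (ennreal x)
    = (INF n. fund_integral w g a (ennreal (x + (y - x) / (real n + 1))))"
proof -
  define xs where "xs n = x + (y - x) / (real n + 1)" for n
  have "AE s in lborel. w s * epowr (Ioo_integral g s (ennreal y)) a \<noteq> \<infinity>"
    using nn_integral_PInf_AE[OF fund_integrand_measurable[OF w a]] fin by (simp add: fund_integral_def)
  then have pointwise: "AE s in lborel. w s * epowr (Ioo_integral g s (ennreal x)) a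
      = (INF n. w s * epowr (Ioo_integral g s (ennreal (xs n))) a)"
  proof eventually_elim
    case (elim s)
    show ?case
    proof (cases "w s = 0")
      case False
      then have "0 < s" using w_0 by (meson not_le)
      have "epowr (Ioo_integral g s (ennreal y)) a \<noteq> \<infinity>"
        using elim False by (auto simp: ennreal_mult_eq_top_iff)
      then have "Ioo_integral g s (ennreal y) < \<infinity>"
        by (metis epowr_eq_top_iff infinity_ennreal_def top.not_eq_extremum)
      then have "w s * epowr (Ioo_integral g s (ennreal x)) a
          = w s * (INF n. epowr (Ioo_integral g s (ennreal (xs n))) a)"
        using Ioo_integral_INF[OF g _ x] \<open>0 < s\<close> by (simp add: xs_def epowr_Inf[OF a] image_image)
      also have "\<dots> = (INF n. w s * epowr (Ioo_integral g s (ennreal (xs n))) a)"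
        by (simp add: ennreal_mult_Inf[OF w_fin] image_image)
      finally show ?thesis .
    qed simp
  qed
  have "fund_integral w g a (ennreal x)
      = (\<integral>\<^sup>+ s. (INF n. w s * epowr (Ioo_integral g s (ennreal (xs n))) a) \<partial>lborel)"
    unfolding fund_integral_def by (rule nn_integral_cong_AE[OF pointwise])
  also have "\<dots> = (INF n. fund_integral w g a (ennreal (xs n)))"
    unfolding fund_integral_def
  proof (rule nn_integral_monotone_convergence_INF_decseq[OF _ fund_integrand_measurable[OF w a]])
    show "decseq (\<lambda>n s. w s * epowr (Ioo_integral g s (ennreal (xs n))) a)"
      using x by (intro decseq_SucI le_funI mult_left_mono epowr_mono Ioo_integral_mono a ennreal_leI)
        (auto simp: xs_def frac_le)
    show "(\<integral>\<^sup>+ s. w s * epowr (Ioo_integral g s (ennreal (xs 0))) a \<partial>lborel) < \<infinity>"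
      using fin by (simp add: xs_def fund_integral_def)
  qed
  finally show ?thesis by (simp add: xs_def)
qed

lemma regular_mono_fund_integral:
  assumes "w \<in> borel_measurable lborel" "g \<in> borel_measurable lborel" "0 < a"
    and "\<And>s. w s < \<infinity>" "\<And>s. s \<le> 0 \<Longrightarrow> w s = 0"
  shows "regular_mono (fund_integral w g a)"
proof (rule regular_monoI_approx)
  show "mono (fund_integral w g a)" using assms(3) by (intro monoI fund_integral_mono)
  show "fund_integral w g a 0 = 0" by (simp add: fund_integral_def Ioo_integral_eq_0)
qed (use fund_integral_SUP[OF assms(1-3)] fund_integral_INF[OF assms] in auto)

lemma fund_integral_eq_0:
  assumes w: "w \<in> borel_measurable lborel" and w_0: "\<And>s. s \<le> 0 \<Longrightarrow> w s = 0" and a: "0 < a"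
    and "Ioo_integral w 0 T = 0"
  shows "fund_integral w g a T = 0"
proof -
  have "AE s in lborel. w s * indicator {s. 0 < s \<and> ennreal s < T} s = 0"
    using assms(4) nn_integral_0_iff_AE[OF Ioo_integrand_measurable[OF w]]
    by (simp add: Ioo_integral_def)
  then have "AE s in lborel. w s * epowr (Ioo_integral g s T) a = 0"
    by eventually_elim (auto simp: w_0 Ioo_integral_eq_0 not_less split: split_indicator_asm)
  then show ?thesis
    using nn_integral_0_iff_AE[OF fund_integrand_measurable[OF w a]] by (simp add: fund_integral_def)
qed

lemma Ioo_integral_mult_le_fund_integral:
  assumes w: "w \<in> borel_measurable lborel" and a: "0 < a"
  shows "Ioo_integral w 0 (ennreal x) * epowr (Ioo_integral g x T) a \<le> fund_integral w g a T"
proof -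
  have "Ioo_integral w 0 (ennreal x) * epowr (Ioo_integral g x T) a
      = (\<integral>\<^sup>+ s. w s * indicator {s. 0 < s \<and> ennreal s < ennreal x} s * epowr (Ioo_integral g x T) a
          \<partial>lborel)"
    unfolding Ioo_integral_def by (rule nn_integral_multc[OF Ioo_integrand_measurable[OF w], symmetric])
  also have "\<dots> \<le> fund_integral w g a T"
    unfolding fund_integral_def
    by (intro nn_integral_mono)
      (auto split: split_indicator simp: ennreal_less_iff
        intro!: mult_left_mono epowr_mono a Ioo_integral_mono)
  finally show ?thesis .
qed

lemma Ioo_integral_le_add:
  assumes g: "g \<in> borel_measurable lborel" and "0 < x"
  shows "Ioo_integral g s T \<le> Ioo_integral g s (ennreal x) + Ioo_integral g x T"
proof -
  have "AE z in lborel. g z * indicator {z. s < z \<and> ennreal z < T} z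
      \<le> g z * indicator {z. s < z \<and> ennreal z < ennreal x} z
        + g z * indicator {z. x < z \<and> ennreal z < T} z"
    using AE_lborel_singleton[of x]
    by eventually_elim (use \<open>0 < x\<close> in \<open>auto split: split_indicator simp: ennreal_less_iff_pos\<close>)
  then show ?thesis
    unfolding Ioo_integral_def
    by (subst nn_integral_add[OF Ioo_integrand_measurable[OF g] Ioo_integrand_measurable[OF g],
        symmetric])
      (rule nn_integral_mono_AE)
qed

lemma fund_integral_top_le:
  assumes g: "g \<in> borel_measurable lborel" and "0 < x" "0 < a" and "Ioo_integral g x \<infinity> = 0"
  shows "fund_integral w g a \<infinity> \<le> fund_integral w g a (ennreal x)"
  unfolding fund_integral_def
  using Ioo_integral_le_add[OF g \<open>0 < x\<close>, of _ \<infinity>] assms(3,4)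
  by (intro nn_integral_mono mult_left_mono epowr_mono) simp_all

text \<open>An infinite mass of \<open>w\<close> on \<open>(0, x)\<close> makes \<open>fund_integral\<close> infinite just to the right of \<open>x\<close>,
  unless \<open>g\<close> vanishes beyond \<open>x\<close>; in that case \<open>fund_integral\<close> is constant from \<open>x\<close> on.\<close>
lemma Ioo_integral_less_top:
  assumes w: "w \<in> borel_measurable lborel" and g: "g \<in> borel_measurable lborel" and a: "0 < a"
    and fin: "\<And>T. T < \<infinity> \<Longrightarrow> fund_integral w g a T < \<infinity>"
    and top: "fund_integral w g a \<infinity> = \<infinity>" and x: "x < \<infinity>"
  shows "Ioo_integral w 0 x < \<infinity>"
proof (rule ccontr)
  assume "\<not> Ioo_integral w 0 x < \<infinity>"
  then have inf: "Ioo_integral w 0 x = \<infinity>" by (simp add: not_less top_unique)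
  obtain xr where xr: "x = ennreal xr" "0 \<le> xr" using x by (cases x) auto
  have "0 < xr"
  proof (rule ccontr)
    assume "\<not> 0 < xr"
    then have "x \<le> ennreal 0" using xr by (simp add: ennreal_eq_0_iff)
    then show False using inf Ioo_integral_eq_0[of x 0 w] by simp
  qed
  show False
  proof (cases "Ioo_integral g xr \<infinity> = 0")
    case True
    have "fund_integral w g a \<infinity> \<le> fund_integral w g a x"
      using fund_integral_top_le[OF g \<open>0 < xr\<close> a True] by (simp add: xr(1))
    then show False using fin[OF x] top by (simp add: top_unique)
  next
    case False
    then have "0 < Ioo_integral g xr \<infinity>" by (simp add: zero_less_iff_neq_zero)
    then obtain y where y: "y < \<infinity>" "0 < Ioo_integral g xr y"
      using regular_monoD(3)[OF regular_mono_Ioo_integral[OF g xr(2)]] by blast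
    have "Ioo_integral w 0 x * epowr (Ioo_integral g xr y) a = \<infinity>"
      using inf epowr_pos[OF a y(2)] by (simp add: ennreal_mult_eq_top_iff)
    then have "fund_integral w g a y = \<infinity>"
      using Ioo_integral_mult_le_fund_integral[OF w a, of xr g y] xr(1) by (simp add: top_unique)
    then show False using fin[OF y(1)] by simp
  qed
qed

lemma growth_pair_integrals:
  assumes w: "w \<in> borel_measurable lborel" and g: "g \<in> borel_measurable lborel"
    and w_fin: "\<And>s. w s < \<infinity>" and w_0: "\<And>s. s \<le> 0 \<Longrightarrow> w s = 0"
    and a: "0 < a" and C: "1 < C" "C < \<infinity>"
    and adm: "\<And>r. 0 < r \<Longrightarrow> 0 < fund_integral w g a (ennreal r) \<and> fund_integral w g a (ennreal r) < \<infinity>"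
  shows "growth_pair (Ioo_integral w 0) (fund_integral w g a) C"
proof
  show G_pos: "0 < fund_integral w g a x" if "0 < x" for x
  proof -
    have "\<exists>r>0. ennreal r \<le> x"
      using \<open>0 < x\<close> by (cases x) (auto intro: exI[of _ 1])
    then obtain r where "0 < r" "ennreal r \<le> x" by blast
    then show ?thesis
      using adm[of r] fund_integral_mono[OF a, of "ennreal r" x] by (meson order_less_le_trans)
  qed
  show G_fin: "fund_integral w g a x < \<infinity>" if "x < \<infinity>" for x
  proof -
    have "\<exists>r>0. x \<le> ennreal r"
      using \<open>x < \<infinity>\<close> by (cases x) (auto intro!: exI[of _ "enn2real x + 1"] ennreal_leI)
    then obtain r where "0 < r" "x \<le> ennreal r" by blast
    then show ?thesis
      using adm[of r] fund_integral_mono[OF a, of x "ennreal r"] by (meson order_le_less_trans)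
  qed
  show "0 < Ioo_integral w 0 x" if "0 < x" for x
    using G_pos[OF that] fund_integral_eq_0[OF w w_0 a] by (auto simp: zero_less_iff_neq_zero)
  show "Ioo_integral w 0 x < \<infinity>" if "fund_integral w g a \<infinity> = \<infinity>" "x < \<infinity>" for x
    using Ioo_integral_less_top[OF w g a G_fin that] .
qed (use assms regular_mono_Ioo_integral regular_mono_fund_integral in auto)

section \<open>Weights and the fundamental function\<close>

definition ennweight :: "(real \<Rightarrow> real) \<Rightarrow> real \<Rightarrow> ennreal" where
  "ennweight w x = ennreal (w x) * indicator {0<..} x"

lemma ennweight_measurable: "weight w \<Longrightarrow> ennweight w \<in> borel_measurable lborel"
proof -
  assume "weight w"
  then have "(\<lambda>x. indicator {0<..} x *\<^sub>R w x) \<in> borel_measurable lborel"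
    by (simp add: weight_def set_borel_measurable_def)
  then have "(\<lambda>x. ennreal (indicator {0<..} x *\<^sub>R w x)) \<in> borel_measurable lborel"
    by simp
  moreover have "ennweight w = (\<lambda>x. ennreal (indicator {0<..} x *\<^sub>R w x))"
    by (auto simp: ennweight_def fun_eq_iff split: split_indicator)
  ultimately show ?thesis by simp
qed

lemma Wint_eq_Ioo_integral: "Wint w s T = Ioo_integral (ennweight w) s T"
  unfolding Wint_def Ioo_integral_def ennweight_def
  by (intro nn_integral_cong) (auto split: split_indicator)

lemma fundfun_power_eq:
  assumes "0 < p" "0 < m"
  shows "epowr (fundfun m p u v T) p = fund_integral (ennweight v) (ennweight u) (p / m) T"
proof -
  have "(\<integral>\<^sup>+ s \<in> {s. 0 < s \<and> ennreal s < T}. ennreal (v s) * epowr (Wint u s T) (p / m) \<partial>lborel)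
      = fund_integral (ennweight v) (ennweight u) (p / m) T"
    unfolding fund_integral_def Wint_eq_Ioo_integral
    by (intro nn_integral_cong)
      (auto simp: ennweight_def Ioo_integral_eq_0 not_less split: split_indicator)
  moreover have "epowr (epowr X (1 / p)) p = X" for X
    using epowr_epowr_inverse[of "1 / p" X] assms(1) by simp
  ultimately show ?thesis unfolding fundfun_def by simp
qed

lemma admissible_fund_integral:
  assumes "0 < p" "0 < m" "admissible m p u v" "0 < r"
  shows "0 < fund_integral (ennweight v) (ennweight u) (p / m) (ennreal r)
    \<and> fund_integral (ennweight v) (ennweight u) (p / m) (ennreal r) < \<infinity>"
  using assms epowr_pos[OF assms(1), of "fundfun m p u v (ennreal r)"]
    epowr_eq_top_iff[of "fundfun m p u v (ennreal r)" p]
  by (auto simp: admissible_def fundfun_power_eq[symmetric] top.not_eq_extremum)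

theorem theorem3p4:
  fixes m p :: real and u v :: "real \<Rightarrow> real"
  assumes "0 < m" and "0 < p"
    and "weight u" and "weight v"
    and "admissible m p u v"
  shows "\<exists>K::ereal. K \<in> {0, \<infinity>} \<and>
    (\<exists>(K1::int set) K2 (t::int \<Rightarrow> ennreal).
       K1 \<inter> K2 = {} \<and> K1 \<union> K2 = Kset K \<and>
       (\<forall>k \<in> Kset K - {k. ereal (of_int k) = K}.
          0 < t (k - 1) \<and> t (k - 1) \<le> t k \<and> t k < \<infinity>) \<and>
       (K = 0 \<longrightarrow> t 0 = \<infinity>) \<and>
       (\<forall>k \<in> Kset K.
          Wint v 0 (t k) \<ge> ennreal (2 powr (p / m + 1)) * Wint v 0 (t (k - 1)) \<and>
          epowr (fundfun m p u v (t k)) p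
            \<ge> ennreal (2 powr (p / m + 1)) * epowr (fundfun m p u v (t (k - 1))) p) \<and>
       (\<forall>k \<in> K1. Wint v 0 (t k) = ennreal (2 powr (p / m + 1)) * Wint v 0 (t (k - 1))) \<and>
       (\<forall>k \<in> K2. epowr (fundfun m p u v (t k)) p
                   = ennreal (2 powr (p / m + 1)) * epowr (fundfun m p u v (t (k - 1))) p))"
proof -
  have "0 < p / m" using assms(1,2) by simp
  then have "(2::real) powr 0 < 2 powr (p / m + 1)" by (intro powr_less_mono) auto
  then have C: "1 < ennreal (2 powr (p / m + 1))"
    by (simp add: ennreal_1[symmetric] ennreal_less_iff del: ennreal_1)
  have "growth_pair (Ioo_integral (ennweight v) 0) (fund_integral (ennweight v) (ennweight u) (p / m))
      (ennreal (2 powr (p / m + 1)))"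
    using assms \<open>0 < p / m\<close> C admissible_fund_integral
    by (intro growth_pair_integrals ennweight_measurable)
      (auto simp: ennweight_def split: split_indicator)
  then show ?thesis
    unfolding Wint_eq_Ioo_integral fundfun_power_eq[OF assms(2,1)]
    by (rule growth_pair.growth_chain_partition)
qed

end
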